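(* Let $\Pi(0)\subsetneq\Pi(1)\subsetneq\cdots\subsetneq\Pi(t-1)$ be fixed subspaces of $\mathbb{F}_q^n$ with $\dim\Pi(j)=d_j$. For $x\in\{u,v\}$ and $j=1,\dots,t$, let $\pi_x(j)$ be the span of $k_x(j)$ vectors chosen uniformly at random from $\Pi(j-1)$, all these draws (over $x$, $j$ and the individual vectors) being mutually independent, where the integers $k_x(j)$ satisfy $1\le k_x(1)<d_0$ and $k_x(j)\le d_{j-1}-d_{j-2}$ for $j=2,\dots,t$. Put $\Pi_x(i)=\sum_{j=1}^i\pi_x(j)$. Then with probability $1-O(q^{-1})$, \[ \Pi_u(i)\not\subseteq\Pi_v(j)\quad\text{and}\quad\Pi_v(j)\not\subseteq\Pi_u(i)\qquad\text{for all } i,j\in\{1,\dots,t\}. \]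
   Context: $O(\cdot)$ refers to $q\to\infty$ with $n,t$ and all dimensions and numbers $k_x(j)$ fixed. *)

theory Defs
  imports "HOL-Algebra.Ring" "HOL-Probability.Probability_Mass_Function"
begin

definition vecs :: "('a, 'b) ring_scheme \<Rightarrow> nat \<Rightarrow> 'a list set" where
  "vecs R n = {v. length v = n \<and> set v \<subseteq> carrier R}"

definition vzero :: "('a, 'b) ring_scheme \<Rightarrow> nat \<Rightarrow> 'a list" where
  "vzero R n = replicate n (ring.zero R)"

definition vadd :: "('a, 'b) ring_scheme \<Rightarrow> 'a list \<Rightarrow> 'a list \<Rightarrow> 'a list" where
  "vadd R u v = map2 (ring.add R) u v"

definition vsmult :: "('a, 'b) ring_scheme \<Rightarrow> 'a \<Rightarrow> 'a list \<Rightarrow> 'a list" where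
  "vsmult R c v = map (monoid.mult R c) v"

inductive_set span :: "('a, 'b) ring_scheme \<Rightarrow> nat \<Rightarrow> 'a list set \<Rightarrow> 'a list set"
  for R n S where
  span_zero: "vzero R n \<in> span R n S"
| span_base: "v \<in> S \<Longrightarrow> v \<in> span R n S"
| span_add: "a \<in> span R n S \<Longrightarrow> b \<in> span R n S \<Longrightarrow> vadd R a b \<in> span R n S"
| span_smult: "c \<in> carrier R \<Longrightarrow> a \<in> span R n S \<Longrightarrow> vsmult R c a \<in> span R n S"

definition subspace :: "('a, 'b) ring_scheme \<Rightarrow> nat \<Rightarrow> 'a list set \<Rightarrow> bool" where
  "subspace R n W \<longleftrightarrow> W \<subseteq> vecs R n \<and> vzero R n \<in> W
     \<and> (\<forall>a\<in>W. \<forall>b\<in>W. vadd R a b \<in> W)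
     \<and> (\<forall>c\<in>carrier R. \<forall>a\<in>W. vsmult R c a \<in> W)"

definition dim :: "('a, 'b) ring_scheme \<Rightarrow> nat \<Rightarrow> 'a list set \<Rightarrow> nat" where
  "dim R n W = (LEAST d. \<exists>B. finite B \<and> card B = d \<and> B \<subseteq> W \<and> span R n B = W)"

definition subspace_sum :: "('a, 'b) ring_scheme \<Rightarrow> nat \<Rightarrow> 'a list set set \<Rightarrow> 'a list set" where
  "subspace_sum R n Ws = span R n (\<Union>Ws)"

text \<open>Sample space of all draws: for x (True = u, False = v), j in 1..t, i < k x j,
  the vector omega x j i lies in P (j-1); unused coordinates are fixed to [].
  The uniform distribution on this set is the product of independent uniform draws.\<close>
definition draws :: "nat \<Rightarrow> (bool \<Rightarrow> nat \<Rightarrow> nat) \<Rightarrow> (nat \<Rightarrow> 'a list set)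
    \<Rightarrow> (bool \<Rightarrow> nat \<Rightarrow> nat \<Rightarrow> 'a list) set" where
  "draws t k P = {\<omega>. \<forall>x j i. if 1 \<le> j \<and> j \<le> t \<and> i < k x j
                      then \<omega> x j i \<in> P (j - 1) else \<omega> x j i = []}"

definition piv :: "('a, 'b) ring_scheme \<Rightarrow> nat \<Rightarrow> (bool \<Rightarrow> nat \<Rightarrow> nat)
    \<Rightarrow> (bool \<Rightarrow> nat \<Rightarrow> nat \<Rightarrow> 'a list) \<Rightarrow> bool \<Rightarrow> nat \<Rightarrow> 'a list set" where
  "piv R n k \<omega> x j = span R n {\<omega> x j i | i. i < k x j}"

definition PIv :: "('a, 'b) ring_scheme \<Rightarrow> nat \<Rightarrow> (bool \<Rightarrow> nat \<Rightarrow> nat)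
    \<Rightarrow> (bool \<Rightarrow> nat \<Rightarrow> nat \<Rightarrow> 'a list) \<Rightarrow> bool \<Rightarrow> nat \<Rightarrow> 'a list set" where
  "PIv R n k \<omega> x i = subspace_sum R n {piv R n k \<omega> x j | j. j \<in> {1..i}}"

end

theory Submission
  imports Defs
begin

(* The proof is a union bound over "bad" draws.  Call a draw bad at (x,j,i) if
   - j = 1 and the i-th first-level vector of x lies in the span pi_y(1) of the
     first-level vectors of the other player y, or
   - j >= 2 and the i-th vector of pi_x(j) lies in the span of Pi(j-2) and the
     vectors of pi_x(j) drawn before it.
   Conditioned on all other coordinates, each bad event says that a uniform vector of
   Pi(j-1) falls into a subspace spanned by fewer than dim Pi(j-1) vectors, hence into
   a proper subspace, which has at most a 1/q fraction of the points.  So every bad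
   event has probability at most 1/q, and there are sum_{x,j} k_x(j) of them.
   If no bad event occurs, each level j >= 2 adds only vectors independent of Pi(j-2),
   so Pi_x(i) meets Pi(0) exactly in pi_x(1); since the first vector of pi_u(1) is not
   in pi_v(1) (and vice versa), no inclusion between Pi_u(i) and Pi_v(j) is possible. *)

context field
begin

subsection \<open>Vectors as lists of coordinates\<close>

lemma vecs_iff: "v \<in> vecs R n \<longleftrightarrow> length v = n \<and> (\<forall>l<n. v ! l \<in> carrier R)"
  unfolding vecs_def by (auto simp: in_set_conv_nth subset_iff)

lemma vecsD: "v \<in> vecs R n \<Longrightarrow> l < n \<Longrightarrow> v ! l \<in> carrier R"
  and vecs_length: "v \<in> vecs R n \<Longrightarrow> length v = n"
  by (auto simp: vecs_iff)

lemma vadd_length [simp]: "length (vadd R u v) = min (length u) (length v)"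
  and vadd_nth [simp]: "l < length u \<Longrightarrow> l < length v \<Longrightarrow> vadd R u v ! l = u ! l \<oplus> v ! l"
  and vsmult_length [simp]: "length (vsmult R c v) = length v"
  and vsmult_nth [simp]: "l < length v \<Longrightarrow> vsmult R c v ! l = c \<otimes> v ! l"
  and vzero_length [simp]: "length (vzero R n) = n"
  and vzero_nth [simp]: "l < n \<Longrightarrow> vzero R n ! l = \<zero>"
  by (simp_all add: vadd_def vsmult_def vzero_def)

lemma vzero_vecs [simp]: "vzero R n \<in> vecs R n"
  and vadd_vecs [simp]: "u \<in> vecs R n \<Longrightarrow> v \<in> vecs R n \<Longrightarrow> vadd R u v \<in> vecs R n"
  and vsmult_vecs [simp]: "c \<in> carrier R \<Longrightarrow> v \<in> vecs R n \<Longrightarrow> vsmult R c v \<in> vecs R n"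
  by (simp_all add: vecs_iff)

lemma vec_eqI:
  "u \<in> vecs R n \<Longrightarrow> v \<in> vecs R n \<Longrightarrow> (\<And>l. l < n \<Longrightarrow> u ! l = v ! l) \<Longrightarrow> u = v"
  by (metis nth_equalityI vecs_length)

lemma finite_vecs: "finite (carrier R) \<Longrightarrow> finite (vecs R n)"
  using finite_lists_length_eq[of "carrier R" n] unfolding vecs_def by (simp add: conj_commute)

lemma vadd_vsmult_zero: "u \<in> vecs R n \<Longrightarrow> w \<in> vecs R n \<Longrightarrow> vadd R u (vsmult R \<zero> w) = u"
  by (rule vec_eqI[of _ n]) (auto simp: vecs_length vecsD)

lemma subspace_cancel:
  assumes S: "subspace R n S" and s: "s \<in> S" and sp: "vadd R s (vsmult R c p) \<in> S"
    and p: "p \<in> vecs R n" and c: "c \<in> carrier R" "c \<noteq> \<zero>"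
  shows "p \<in> S"
proof -
  have Sv: "S \<subseteq> vecs R n" using S by (simp add: subspace_def)
  have len: "length p = n" "length s = n" using p s Sv vecs_length by auto
  have ic: "inv c \<in> carrier R" "inv c \<otimes> c = \<one>" using c field_Units by auto
  have "p = vsmult R (inv c) (vadd R (vadd R s (vsmult R c p)) (vsmult R (\<ominus> \<one>) s))"
  proof (rule vec_eqI[of _ n])
    fix l assume l: "l < n"
    have pl: "p ! l \<in> carrier R" and sl: "s ! l \<in> carrier R" using p s Sv l vecsD by auto
    have "inv c \<otimes> (s ! l \<oplus> c \<otimes> p ! l \<oplus> \<ominus> \<one> \<otimes> s ! l) = (inv c \<otimes> c) \<otimes> p ! l"
      using pl sl c ic(1) by algebra
    also have "\<dots> = p ! l" by (simp only: ic(2) l_one[OF pl])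
    finally show "p ! l = vsmult R (inv c) (vadd R (vadd R s (vsmult R c p)) (vsmult R (\<ominus> \<one>) s)) ! l"
      using l by (simp add: len)
  qed (use p s Sv ic c in auto)
  also have "\<dots> \<in> S" using S s sp ic by (simp add: subspace_def)
  finally show ?thesis .
qed

subsection \<open>Spans\<close>

lemma span_vecs: "S \<subseteq> vecs R n \<Longrightarrow> span R n S \<subseteq> vecs R n"
proof
  fix x assume S: "S \<subseteq> vecs R n" and x: "x \<in> span R n S"
  from x show "x \<in> vecs R n" by (induction rule: Defs.span.induct) (use S in auto)
qed

lemma span_minimal: "subspace R n W \<Longrightarrow> S \<subseteq> W \<Longrightarrow> span R n S \<subseteq> W"
proof
  fix x assume W: "subspace R n W" and S: "S \<subseteq> W" and x: "x \<in> span R n S"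
  from x show "x \<in> W" by (induction rule: Defs.span.induct) (use W S in \<open>auto simp: subspace_def\<close>)
qed

lemma span_subspace: "S \<subseteq> vecs R n \<Longrightarrow> subspace R n (span R n S)"
  unfolding subspace_def using span_vecs by (auto intro: Defs.span.intros)

lemma span_superset: "S \<subseteq> span R n S"
  by (auto intro: Defs.span.intros)

lemma span_mono: "A \<subseteq> B \<Longrightarrow> span R n A \<subseteq> span R n B"
proof
  fix x assume AB: "A \<subseteq> B" and x: "x \<in> span R n A"
  from x show "x \<in> span R n B"
    by (induction rule: Defs.span.induct) (use AB in \<open>auto intro: Defs.span.intros\<close>)
qed

lemma span_of_subspace: "subspace R n W \<Longrightarrow> span R n W = W"
  using span_minimal span_superset by blast

lemma span_Union_spans:
  assumes "\<Union>F \<subseteq> vecs R n"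
  shows "span R n (\<Union>(span R n ` F)) = span R n (\<Union>F)"
proof
  have "\<Union>(span R n ` F) \<subseteq> span R n (\<Union>F)"
    using span_mono by (metis SUP_least Sup_upper)
  then show "span R n (\<Union>(span R n ` F)) \<subseteq> span R n (\<Union>F)"
    using span_minimal span_subspace assms by metis
  show "span R n (\<Union>F) \<subseteq> span R n (\<Union>(span R n ` F))"
    using span_superset by (intro span_mono) blast
qed

lemma span_Un_span:
  "A \<subseteq> vecs R n \<Longrightarrow> B \<subseteq> vecs R n \<Longrightarrow> span R n (span R n A \<union> B) = span R n (A \<union> B)"
proof -
  assume A: "A \<subseteq> vecs R n" and B: "B \<subseteq> vecs R n"
  have "span R n (span R n A \<union> B) \<subseteq> span R n (A \<union> B)"
    using span_mono[of A "A \<union> B"] span_superset[of "A \<union> B"] A B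
    by (intro span_minimal span_subspace) auto
  moreover have "span R n (A \<union> B) \<subseteq> span R n (span R n A \<union> B)"
    using span_superset[of A] by (intro span_mono) auto
  ultimately show ?thesis by (rule antisym)
qed

lemma span_insert_decompose:
  assumes U: "subspace R n U" and w: "w \<in> vecs R n" and x: "x \<in> span R n (U \<union> {w})"
  shows "\<exists>u\<in>U. \<exists>c\<in>carrier R. x = vadd R u (vsmult R c w)"
  using x
proof (induction rule: Defs.span.induct)
  case span_zero
  have "vzero R n = vadd R (vzero R n) (vsmult R \<zero> w)"
    by (rule vadd_vsmult_zero[OF vzero_vecs w, symmetric])
  moreover have "vzero R n \<in> U" using U by (simp add: subspace_def)
  ultimately show ?case using zero_closed by blast
next
  case (span_base v)
  have Uv: "U \<subseteq> vecs R n" using U by (simp add: subspace_def)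
  show ?case
  proof (cases "v \<in> U")
    case True
    then have "v \<in> vecs R n" using Uv by blast
    then have "v = vadd R v (vsmult R \<zero> w)" using vadd_vsmult_zero[of v n w] w by simp
    then show ?thesis using True zero_closed by blast
  next
    case False
    then have "v = vadd R (vzero R n) (vsmult R \<one> w)"
      using span_base by (intro vec_eqI[of _ n]) (use w vecsD in \<open>auto simp: vecs_length\<close>)
    moreover have "vzero R n \<in> U" using U by (simp add: subspace_def)
    ultimately show ?thesis using one_closed by blast
  qed
next
  case (span_add a b)
  then obtain u1 c1 u2 c2 where a: "a = vadd R u1 (vsmult R c1 w)" "u1 \<in> U" "c1 \<in> carrier R"
    and b: "b = vadd R u2 (vsmult R c2 w)" "u2 \<in> U" "c2 \<in> carrier R" by blast
  have u: "u1 \<in> vecs R n" "u2 \<in> vecs R n" using a b U by (auto simp: subspace_def)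
  have "vadd R a b = vadd R (vadd R u1 u2) (vsmult R (c1 \<oplus> c2) w)"
  proof (rule vec_eqI[of _ n])
    fix l assume l: "l < n"
    have "u1 ! l \<in> carrier R" "u2 ! l \<in> carrier R" "w ! l \<in> carrier R"
      using u w l vecsD by auto
    then have "u1 ! l \<oplus> c1 \<otimes> w ! l \<oplus> (u2 ! l \<oplus> c2 \<otimes> w ! l)
               = u1 ! l \<oplus> u2 ! l \<oplus> (c1 \<oplus> c2) \<otimes> w ! l"
      using a(3) b(3) by algebra
    then show "vadd R a b ! l = vadd R (vadd R u1 u2) (vsmult R (c1 \<oplus> c2) w) ! l"
      using l a b u w by (simp add: vecs_length)
  qed (use a b u w in auto)
  moreover have "vadd R u1 u2 \<in> U" using U a b by (simp add: subspace_def)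
  moreover have "c1 \<oplus> c2 \<in> carrier R" using a b by simp
  ultimately show ?case by blast
next
  case (span_smult c a)
  then obtain u1 c1 where a: "a = vadd R u1 (vsmult R c1 w)" "u1 \<in> U" "c1 \<in> carrier R" by blast
  have u: "u1 \<in> vecs R n" using a U by (auto simp: subspace_def)
  have "vsmult R c a = vadd R (vsmult R c u1) (vsmult R (c \<otimes> c1) w)"
  proof (rule vec_eqI[of _ n])
    fix l assume l: "l < n"
    have "u1 ! l \<in> carrier R" "w ! l \<in> carrier R" using u w l vecsD by auto
    then have "c \<otimes> (u1 ! l \<oplus> c1 \<otimes> w ! l) = c \<otimes> u1 ! l \<oplus> (c \<otimes> c1) \<otimes> w ! l"
      using a(3) span_smult(1) by (simp add: r_distr m_assoc)
    then show "vsmult R c a ! l = vadd R (vsmult R c u1) (vsmult R (c \<otimes> c1) w) ! l"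
      using l a u w by (simp add: vecs_length)
  qed (use a(1,3) u w span_smult(1) in simp_all)
  moreover have "vsmult R c u1 \<in> U" using U a span_smult(1) by (simp add: subspace_def)
  moreover have "c \<otimes> c1 \<in> carrier R" using a span_smult(1) by simp
  ultimately show ?case by blast
qed

lemma span_insert_inter:
  assumes Q: "subspace R n Q" and U: "subspace R n U" and w: "w \<in> vecs R n"
    and indep: "w \<notin> span R n (Q \<union> U)"
  shows "span R n (U \<union> {w}) \<inter> Q \<subseteq> U"
proof
  fix x assume x: "x \<in> span R n (U \<union> {w}) \<inter> Q"
  obtain u c where xu: "x = vadd R u (vsmult R c w)" and u: "u \<in> U" and c: "c \<in> carrier R"
    using span_insert_decompose[OF U w] x by blast
  have uv: "u \<in> vecs R n" using u U by (auto simp: subspace_def)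
  have "c = \<zero>"
  proof (rule ccontr)
    assume "c \<noteq> \<zero>"
    have QU: "Q \<union> U \<subseteq> vecs R n" using Q U by (simp add: subspace_def)
    have "u \<in> span R n (Q \<union> U)" "x \<in> span R n (Q \<union> U)"
      using u x span_superset[of "Q \<union> U" n] by auto
    then have "w \<in> span R n (Q \<union> U)"
      using subspace_cancel[OF span_subspace[OF QU]] xu w c \<open>c \<noteq> \<zero>\<close> by blast
    then show False using indep by blast
  qed
  then show "x \<in> U" using xu u uv w vadd_vsmult_zero by simp
qed

lemma span_independent_extension_inter:
  fixes K :: nat
  assumes Q: "subspace R n Q" and A: "A \<subseteq> Q"
    and ws: "\<And>i. i < K \<Longrightarrow> ws i \<in> vecs R n"
    and indep: "\<And>i. i < K \<Longrightarrow> ws i \<notin> span R n (Q \<union> {ws i' | i'. i' < i})"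
  shows "span R n (A \<union> {ws i | i. i < K}) \<inter> Q \<subseteq> span R n A"
  using ws indep
proof (induction K)
  case 0
  then show ?case by simp
next
  case (Suc K)
  have Qv: "Q \<subseteq> vecs R n" using Q by (simp add: subspace_def)
  define W where "W = {ws i | i. i < K}"
  have AW: "A \<union> W \<subseteq> vecs R n" using A Qv Suc.prems(1) unfolding W_def by auto
  define U where "U = span R n (A \<union> W)"
  have U: "subspace R n U" unfolding U_def using AW by (rule span_subspace)
  have w: "ws K \<in> vecs R n" using Suc.prems(1) by simp
  have "Q \<union> U \<subseteq> span R n (Q \<union> W)"
    unfolding U_def using A span_superset[of "Q \<union> W"] span_mono[of "A \<union> W" "Q \<union> W"] by blast
  then have "span R n (Q \<union> U) \<subseteq> span R n (Q \<union> W)"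
    using Qv AW by (intro span_minimal span_subspace) auto
  moreover have "ws K \<notin> span R n (Q \<union> W)" using Suc.prems(2)[of K] unfolding W_def by simp
  ultimately have "ws K \<notin> span R n (Q \<union> U)" by blast
  then have step: "span R n (U \<union> {ws K}) \<inter> Q \<subseteq> U"
    by (rule span_insert_inter[OF Q U w])
  have "A \<union> {ws i | i. i < Suc K} = (A \<union> W) \<union> {ws K}"
    unfolding W_def by (auto simp: less_Suc_eq)
  then have "span R n (A \<union> {ws i | i. i < Suc K}) = span R n (U \<union> {ws K})"
    unfolding U_def using span_Un_span[where A="A \<union> W" and B="{ws K}"] AW w by simp
  then have "span R n (A \<union> {ws i | i. i < Suc K}) \<inter> Q \<subseteq> U \<inter> Q" using step by auto
  also have "U \<inter> Q \<subseteq> span R n A" unfolding U_def W_def using Suc by simp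
  finally show ?case .
qed

subsection \<open>Counting points of subspaces\<close>

lemma vadd_vsmult_shift:
  assumes "s1 \<in> vecs R n" "s2 \<in> vecs R n" "p \<in> vecs R n" "c1 \<in> carrier R" "c2 \<in> carrier R"
    and eq: "vadd R s1 (vsmult R c1 p) = vadd R s2 (vsmult R c2 p)"
  shows "s1 = vadd R s2 (vsmult R (c2 \<ominus> c1) p)"
proof (rule vec_eqI[of _ n])
  fix l assume l: "l < n"
  have len: "length s1 = n" "length s2 = n" "length p = n" using assms vecs_length by auto
  have cs: "s1 ! l \<in> carrier R" "s2 ! l \<in> carrier R" "p ! l \<in> carrier R"
    using assms l vecsD by auto
  have e: "s1 ! l \<oplus> c1 \<otimes> p ! l = s2 ! l \<oplus> c2 \<otimes> p ! l"
    using arg_cong[OF eq, of "\<lambda>v. v ! l"] l by (simp add: len)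
  have "s1 ! l = (s1 ! l \<oplus> c1 \<otimes> p ! l) \<ominus> c1 \<otimes> p ! l"
    using cs assms(4) by algebra
  also have "\<dots> = (s2 ! l \<oplus> c2 \<otimes> p ! l) \<ominus> c1 \<otimes> p ! l" by (simp only: e)
  also have "\<dots> = s2 ! l \<oplus> (c2 \<ominus> c1) \<otimes> p ! l"
    using cs assms(4,5) by algebra
  finally show "s1 ! l = vadd R s2 (vsmult R (c2 \<ominus> c1) p) ! l" using l by (simp add: len)
qed (use assms in auto)

text \<open>A subspace S not containing Y meets Y in at most a 1/q fraction of its points:
  for p in Y - S the map (c, s) \<mapsto> s + c p embeds carrier R \<times> (Y \<inter> S) into Y.\<close>
lemma card_inter_proper_subspace:
  assumes fin: "finite (carrier R)"
    and Y: "subspace R n Y" and S: "subspace R n S" and notsub: "\<not> Y \<subseteq> S"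
  shows "card (Y \<inter> S) * card (carrier R) \<le> card Y"
proof -
  obtain p where p: "p \<in> Y" "p \<notin> S" using notsub by blast
  have Yv: "Y \<subseteq> vecs R n" and Sv: "S \<subseteq> vecs R n" using Y S by (auto simp: subspace_def)
  have pv: "p \<in> vecs R n" using p Yv by auto
  have finY: "finite Y" using finite_vecs[OF fin] Yv finite_subset by blast
  define h where "h = (\<lambda>(c, s). vadd R s (vsmult R c p))"
  have "h ` (carrier R \<times> (Y \<inter> S)) \<subseteq> Y"
    using Y p unfolding h_def subspace_def by auto
  moreover have "inj_on h (carrier R \<times> (Y \<inter> S))"
  proof (rule inj_onI, clarify)
    fix c1 s1 c2 s2
    assume c: "c1 \<in> carrier R" "c2 \<in> carrier R" and s: "s1 \<in> S" "s2 \<in> S"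
      and eq: "h (c1, s1) = h (c2, s2)"
    have sv: "s1 \<in> vecs R n" "s2 \<in> vecs R n" using s Sv by auto
    have shift: "s1 = vadd R s2 (vsmult R (c2 \<ominus> c1) p)"
      using vadd_vsmult_shift[OF sv pv c] eq by (simp add: h_def)
    have "c2 \<ominus> c1 = \<zero>"
    proof (rule ccontr)
      assume "c2 \<ominus> c1 \<noteq> \<zero>"
      then have "p \<in> S" using subspace_cancel[OF S s(2)] shift s(1) pv c by simp
      then show False using p(2) by blast
    qed
    moreover have "c2 = (c2 \<ominus> c1) \<oplus> c1" using c by algebra
    ultimately have "c1 = c2" using c by simp
    moreover have "s1 = s2" using shift \<open>c2 \<ominus> c1 = \<zero>\<close> vadd_vsmult_zero sv pv by simp
    ultimately show "c1 = c2 \<and> s1 = s2" by simp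
  qed
  ultimately have "card (carrier R \<times> (Y \<inter> S)) \<le> card Y"
    using card_inj_on_le finY by blast
  then show ?thesis by (simp add: card_cartesian_product mult.commute)
qed

lemma dim_basis:
  assumes fin: "finite (carrier R)" and W: "subspace R n W"
  shows "\<exists>B. finite B \<and> card B = dim R n W \<and> B \<subseteq> W \<and> span R n B = W"
proof -
  have "finite W" using W finite_vecs[OF fin] finite_subset unfolding subspace_def by blast
  then have "\<exists>d B. finite B \<and> card B = d \<and> B \<subseteq> W \<and> span R n B = W"
    using span_of_subspace[OF W] by blast
  from LeastI_ex[OF this] show ?thesis unfolding dim_def .
qed

lemma dim_le_card: "finite B \<Longrightarrow> span R n B = W \<Longrightarrow> dim R n W \<le> card B"
  unfolding dim_def using span_superset by (intro Least_le) blast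

lemma card_inter_small_span:
  assumes fin: "finite (carrier R)" and Y: "subspace R n Y"
    and B: "finite B" "B \<subseteq> Y" "card B < dim R n Y"
  shows "card (Y \<inter> span R n B) * card (carrier R) \<le> card Y"
proof (rule card_inter_proper_subspace[OF fin Y])
  show "subspace R n (span R n B)"
    using B(2) Y by (intro span_subspace) (auto simp: subspace_def)
  show "\<not> Y \<subseteq> span R n B"
  proof
    assume "Y \<subseteq> span R n B"
    then have "span R n B = Y" using span_minimal[OF Y B(2)] by blast
    then have "dim R n Y \<le> card B" by (rule dim_le_card[OF B(1)])
    then show False using B(3) by simp
  qed
qed

end

subsection \<open>The sample space of draws\<close>

lemma draws_inside: "\<omega> \<in> draws t k P \<Longrightarrow> 1 \<le> j \<Longrightarrow> j \<le> t \<Longrightarrow> i < k x j \<Longrightarrow> \<omega> x j i \<in> P (j - 1)"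
  and draws_outside: "\<omega> \<in> draws t k P \<Longrightarrow> \<not> (1 \<le> j \<and> j \<le> t \<and> i < k x j) \<Longrightarrow> \<omega> x j i = []"
  unfolding draws_def by (metis (mono_tags, lifting) mem_Collect_eq)+

definition draw_indices :: "nat \<Rightarrow> (bool \<Rightarrow> nat \<Rightarrow> nat) \<Rightarrow> (bool \<times> nat \<times> nat) set" where
  "draw_indices t k = Sigma UNIV (\<lambda>x. Sigma {1..t} (\<lambda>j. {..<k x j}))"

lemma finite_draw_indices: "finite (draw_indices t k)"
  unfolding draw_indices_def by (intro finite_SigmaI) auto

lemma mem_draw_indices [simp]: "(x, j, i) \<in> draw_indices t k \<longleftrightarrow> 1 \<le> j \<and> j \<le> t \<and> i < k x j"
  unfolding draw_indices_def by auto

text \<open>A draw is determined by its restriction to the finite set of used indices.\<close>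
lemma finite_draws:
  fixes P :: "nat \<Rightarrow> 'a list set"
  assumes fin: "\<And>j. 1 \<le> j \<Longrightarrow> j \<le> t \<Longrightarrow> finite (P (j - 1))"
  shows "finite (draws t k P)"
proof -
  define I where "I = draw_indices t k"
  define f where "f = (\<lambda>\<omega> :: bool \<Rightarrow> nat \<Rightarrow> nat \<Rightarrow> 'a list. restrict (\<lambda>(x, j, i). \<omega> x j i) I)"
  have "f \<omega> \<in> PiE I (\<lambda>(x, j, i). P (j - 1))" if \<omega>: "\<omega> \<in> draws t k P" for \<omega>
  proof (rule PiE_I)
    fix c assume c: "c \<in> I"
    then obtain x j i where c_eq: "c = (x, j, i)" and idx: "1 \<le> j" "j \<le> t" "i < k x j"
      unfolding I_def by (cases c) auto
    have "\<omega> x j i \<in> P (j - 1)" using draws_inside[OF \<omega> idx] .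
    then show "f \<omega> c \<in> (case c of (x, j, i) \<Rightarrow> P (j - 1))" using c by (simp add: f_def c_eq)
  qed (simp add: f_def)
  then have image: "f ` draws t k P \<subseteq> PiE I (\<lambda>(x, j, i). P (j - 1))"
    by (rule image_subsetI)
  have finite_Pi: "finite (PiE I (\<lambda>(x, j, i). P (j - 1)))"
    using fin finite_draw_indices unfolding I_def by (intro finite_PiE) auto
  have inj: "inj_on f (draws t k P)"
  proof (rule inj_onI, intro ext)
    fix \<omega>1 \<omega>2 x j i
    assume \<omega>: "\<omega>1 \<in> draws t k P" "\<omega>2 \<in> draws t k P" and eq: "f \<omega>1 = f \<omega>2"
    show "\<omega>1 x j i = \<omega>2 x j i"
    proof (cases "1 \<le> j \<and> j \<le> t \<and> i < k x j")
      case True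
      then show ?thesis using fun_cong[OF eq, of "(x, j, i)"] unfolding f_def I_def by simp
    next
      case False
      then show ?thesis using draws_outside[OF \<omega>(1) False] draws_outside[OF \<omega>(2) False] by simp
    qed
  qed
  show ?thesis using finite_imageD[OF finite_subset[OF image finite_Pi] inj] .
qed

lemma draws_nonempty:
  assumes ne: "\<And>j. 1 \<le> j \<Longrightarrow> j \<le> t \<Longrightarrow> P (j - 1) \<noteq> {}"
  shows "draws t k P \<noteq> {}"
proof -
  define \<omega> where "\<omega> = (\<lambda>x j i. if 1 \<le> j \<and> j \<le> t \<and> i < k x j then SOME y. y \<in> P (j - 1) else [])"
  have "\<omega> \<in> draws t k P"
    unfolding draws_def \<omega>_def using ne by (auto simp: some_in_eq)
  then show ?thesis by blast
qed

definition redraw :: "(bool \<Rightarrow> nat \<Rightarrow> nat \<Rightarrow> 'a) \<Rightarrow> bool \<Rightarrow> nat \<Rightarrow> nat \<Rightarrow> 'a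
    \<Rightarrow> bool \<Rightarrow> nat \<Rightarrow> nat \<Rightarrow> 'a" where
  "redraw \<omega> x0 j0 i0 y = (\<lambda>x j i. if x = x0 \<and> j = j0 \<and> i = i0 then y else \<omega> x j i)"

lemma redraw_draws:
  assumes "\<omega> \<in> draws t k P" "1 \<le> j0" "j0 \<le> t" "i0 < k x0 j0" "y \<in> P (j0 - 1)"
  shows "redraw \<omega> x0 j0 i0 y \<in> draws t k P"
  using assms draws_inside[OF assms(1)] draws_outside[OF assms(1)]
  unfolding draws_def redraw_def by auto

text \<open>The coordinate is described by a lens (get, put).\<close>
lemma card_single_coordinate_bound:
  fixes get :: "'w \<Rightarrow> 'b" and put :: "'w \<Rightarrow> 'b \<Rightarrow> 'w"
  assumes finD: "finite D" and finY: "finite Y"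
    and get_put: "\<And>\<omega> y. get (put \<omega> y) = y"
    and put_put: "\<And>\<omega> y y'. put (put \<omega> y) y' = put \<omega> y'"
    and put_get: "\<And>\<omega>. put \<omega> (get \<omega>) = \<omega>"
    and closed: "\<And>\<omega> y. \<omega> \<in> D \<Longrightarrow> y \<in> Y \<Longrightarrow> put \<omega> y \<in> D"
    and get_in: "\<And>\<omega>. \<omega> \<in> D \<Longrightarrow> get \<omega> \<in> Y"
    and fibre: "\<And>\<omega>. \<omega> \<in> D \<Longrightarrow> card {y \<in> Y. put \<omega> y \<in> E} * q \<le> card Y"
  shows "card (D \<inter> E) * q \<le> card D"
proof -
  define rest where "rest = (\<lambda>\<omega>. put \<omega> undefined)"
  define f where "f = (\<lambda>\<omega>. (rest \<omega>, get \<omega>))"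
  define Z where "Z = rest ` D"
  have rest_put: "rest (put \<omega> y) = rest \<omega>" and put_rest: "put (rest \<omega>) y = put \<omega> y" for \<omega> y
    unfolding rest_def by (simp_all add: put_put)
  have f_put: "f (put \<omega> y) = (rest \<omega>, y)" for \<omega> y
    by (simp add: f_def rest_put get_put)
  have inj: "inj_on f D"
  proof (rule inj_onI)
    fix \<omega>1 \<omega>2 assume "f \<omega>1 = f \<omega>2"
    then have "rest \<omega>1 = rest \<omega>2" "get \<omega>1 = get \<omega>2" by (simp_all add: f_def)
    then have "put (rest \<omega>1) (get \<omega>1) = put (rest \<omega>2) (get \<omega>2)" by simp
    then show "\<omega>1 = \<omega>2" by (simp add: put_rest put_get)
  qed
  have image_D: "f ` D = Z \<times> Y"
  proof
    show "f ` D \<subseteq> Z \<times> Y" unfolding f_def Z_def using get_in by auto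
    show "Z \<times> Y \<subseteq> f ` D"
    proof
      fix p assume "p \<in> Z \<times> Y"
      then obtain \<omega> y where p: "p = (rest \<omega>, y)" and "\<omega> \<in> D" "y \<in> Y" unfolding Z_def by blast
      then have "put \<omega> y \<in> D" by (intro closed)
      then show "p \<in> f ` D" using f_put[of \<omega> y] p by (simp add: rev_image_eqI)
    qed
  qed
  have image_DE: "f ` (D \<inter> E) = Sigma Z (\<lambda>z. {y \<in> Y. put z y \<in> E})"
  proof
    show "f ` (D \<inter> E) \<subseteq> Sigma Z (\<lambda>z. {y \<in> Y. put z y \<in> E})"
      unfolding f_def Z_def using get_in by (auto simp: put_rest put_get)
    show "Sigma Z (\<lambda>z. {y \<in> Y. put z y \<in> E}) \<subseteq> f ` (D \<inter> E)"
    proof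
      fix p assume "p \<in> Sigma Z (\<lambda>z. {y \<in> Y. put z y \<in> E})"
      then obtain \<omega> y where p: "p = (rest \<omega>, y)"
        and "\<omega> \<in> D" "y \<in> Y" "put (rest \<omega>) y \<in> E" unfolding Z_def by blast
      then have "put \<omega> y \<in> D \<inter> E" using closed by (simp add: put_rest)
      then show "p \<in> f ` (D \<inter> E)" using f_put[of \<omega> y] p by (simp add: rev_image_eqI)
    qed
  qed
  have finZ: "finite Z" unfolding Z_def using finD by simp
  have card_D: "card D = card Z * card Y"
    using card_image[OF inj] image_D by (simp add: card_cartesian_product)
  have "card (D \<inter> E) = card (Sigma Z (\<lambda>z. {y \<in> Y. put z y \<in> E}))"
    using card_image[OF inj_on_subset[OF inj, of "D \<inter> E"]] image_DE by simp
  also have "\<dots> = (\<Sum>z\<in>Z. card {y \<in> Y. put z y \<in> E})"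
    using finZ finY by (simp add: card_SigmaI)
  finally have card_DE: "card (D \<inter> E) = (\<Sum>z\<in>Z. card {y \<in> Y. put z y \<in> E})" .
  have "card (D \<inter> E) * q = (\<Sum>z\<in>Z. card {y \<in> Y. put z y \<in> E} * q)"
    unfolding card_DE by (simp add: sum_distrib_right)
  also have "\<dots> \<le> (\<Sum>z\<in>Z. card Y)"
    by (rule sum_mono) (auto simp: Z_def put_rest intro: fibre)
  also have "\<dots> = card D" using card_D by simp
  finally show ?thesis .
qed

lemma prob_single_draw_bound:
  fixes E :: "(bool \<Rightarrow> nat \<Rightarrow> nat \<Rightarrow> 'a list) set" and q :: nat
  assumes fin: "\<And>j. 1 \<le> j \<Longrightarrow> j \<le> t \<Longrightarrow> finite (P (j - 1))"
    and ne: "draws t k P \<noteq> {}" and q: "q > 0"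
    and idx: "1 \<le> jr" "jr \<le> t" "ir < k xr jr"
    and fibre: "\<And>\<omega>. \<omega> \<in> draws t k P \<Longrightarrow>
        card {y \<in> P (jr - 1). redraw \<omega> xr jr ir y \<in> E} * q \<le> card (P (jr - 1))"
  shows "measure_pmf.prob (pmf_of_set (draws t k P)) E \<le> 1 / q"
proof -
  have finD: "finite (draws t k P)" using fin by (rule finite_draws)
  have "card (draws t k P \<inter> E) * q \<le> card (draws t k P)"
  proof (rule card_single_coordinate_bound[OF finD fin[OF idx(1,2)],
        where get = "\<lambda>\<omega>. \<omega> xr jr ir" and put = "\<lambda>\<omega>. redraw \<omega> xr jr ir"])
    show "\<omega> xr jr ir \<in> P (jr - 1)" if "\<omega> \<in> draws t k P" for \<omega>
      using draws_inside[OF that idx] .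
    show "redraw \<omega> xr jr ir y \<in> draws t k P" if "\<omega> \<in> draws t k P" "y \<in> P (jr - 1)" for \<omega> y
      using redraw_draws[OF that(1) idx that(2)] .
    show "card {y \<in> P (jr - 1). redraw \<omega> xr jr ir y \<in> E} * q \<le> card (P (jr - 1))"
      if "\<omega> \<in> draws t k P" for \<omega>
      using fibre[OF that] .
  qed (auto simp: redraw_def intro!: ext)
  then have "real (card (draws t k P \<inter> E)) * q \<le> card (draws t k P)"
    by (metis of_nat_le_iff of_nat_mult)
  moreover have "card (draws t k P) > 0" using ne finD by (simp add: card_gt_0_iff)
  ultimately show ?thesis
    using q by (simp add: measure_pmf_of_set[OF ne finD] field_simps)
qed

subsection \<open>Bad draws\<close>

lemma chain_mono:
  assumes chain: "\<forall>j. Suc j < t \<longrightarrow> P j \<subset> P (Suc j)"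
  shows "a \<le> b \<Longrightarrow> b < t \<Longrightarrow> P a \<subseteq> P b"
proof (induction b)
  case (Suc b)
  then show ?case using chain by (cases "a = Suc b") (auto simp: le_Suc_eq)
qed simp

definition block :: "(bool \<Rightarrow> nat \<Rightarrow> nat) \<Rightarrow> (bool \<Rightarrow> nat \<Rightarrow> nat \<Rightarrow> 'a) \<Rightarrow> bool \<Rightarrow> nat \<Rightarrow> 'a set" where
  "block k \<omega> x j = {\<omega> x j i | i. i < k x j}"

lemma finite_block: "finite (block k \<omega> x j)" and card_block: "card (block k \<omega> x j) \<le> k x j"
proof -
  have eq: "block k \<omega> x j = (\<lambda>i. \<omega> x j i) ` {..<k x j}" unfolding block_def by auto
  show "finite (block k \<omega> x j)" unfolding eq by simp
  show "card (block k \<omega> x j) \<le> k x j" unfolding eq using card_image_le[of "{..<k x j}"] by simp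
qed

lemma block_draws: "\<omega> \<in> draws t k P \<Longrightarrow> 1 \<le> j \<Longrightarrow> j \<le> t \<Longrightarrow> block k \<omega> x j \<subseteq> P (j - 1)"
  unfolding block_def using draws_inside by blast

definition bad_region :: "('a, 'b) ring_scheme \<Rightarrow> nat \<Rightarrow> (bool \<Rightarrow> nat \<Rightarrow> nat) \<Rightarrow> (nat \<Rightarrow> 'a list set)
    \<Rightarrow> (bool \<Rightarrow> nat \<Rightarrow> nat \<Rightarrow> 'a list) \<Rightarrow> bool \<Rightarrow> nat \<Rightarrow> nat \<Rightarrow> 'a list set" where
  "bad_region R n k P \<omega> x j i =
     (if j = 1 then span R n (block k \<omega> (\<not> x) 1)
      else span R n (P (j - 2) \<union> {\<omega> x j i' | i'. i' < i}))"

definition bad_draw :: "('a, 'b) ring_scheme \<Rightarrow> nat \<Rightarrow> (bool \<Rightarrow> nat \<Rightarrow> nat) \<Rightarrow> (nat \<Rightarrow> 'a list set)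
    \<Rightarrow> (bool \<Rightarrow> nat \<Rightarrow> nat \<Rightarrow> 'a list) \<Rightarrow> bool \<Rightarrow> nat \<Rightarrow> nat \<Rightarrow> bool" where
  "bad_draw R n k P \<omega> x j i \<longleftrightarrow> \<omega> x j i \<in> bad_region R n k P \<omega> x j i"

definition some_bad_draw :: "('a, 'b) ring_scheme \<Rightarrow> nat \<Rightarrow> (bool \<Rightarrow> nat \<Rightarrow> nat) \<Rightarrow> (nat \<Rightarrow> 'a list set)
    \<Rightarrow> nat \<Rightarrow> (bool \<Rightarrow> nat \<Rightarrow> nat \<Rightarrow> 'a list) set" where
  "some_bad_draw R n k P t = (\<Union>(x, j, i)\<in>draw_indices t k. {\<omega>. bad_draw R n k P \<omega> x j i})"

lemma bad_region_redraw: "bad_region R n k P (redraw \<omega> x j i y) x j i = bad_region R n k P \<omega> x j i"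
proof -
  have "{redraw \<omega> x j i y x j i' | i'. i' < i} = {\<omega> x j i' | i'. i' < i}"
    unfolding redraw_def by auto
  moreover have "block k (redraw \<omega> x j i y) (\<not> x) 1 = block k \<omega> (\<not> x) 1"
    unfolding block_def redraw_def by auto
  ultimately show ?thesis unfolding bad_region_def by (simp only:)
qed

context field
begin

lemma finite_level:
  fixes t j :: nat
  assumes "finite (carrier R)" "\<forall>j<t. subspace R n (P j)" "1 \<le> j" "j \<le> t"
  shows "finite (P (j - 1))"
proof -
  have "j - 1 < t" using assms(3,4) by simp
  then have "subspace R n (P (j - 1))" using assms(2) by blast
  then have "P (j - 1) \<subseteq> vecs R n" by (simp add: subspace_def)
  then show ?thesis using finite_vecs[OF assms(1)] by (rule finite_subset)
qed

lemma draws_finite_nonempty: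
  assumes fin: "finite (carrier R)" and sub: "\<forall>j<t. subspace R n (P j)"
  shows "finite (draws t k P)" and "draws t k P \<noteq> {}"
proof -
  show "finite (draws t k P)" using finite_level[OF fin sub] by (rule finite_draws)
  show "draws t k P \<noteq> {}"
  proof (rule draws_nonempty)
    fix j :: nat assume "1 \<le> j" "j \<le> t"
    then have "vzero R n \<in> P (j - 1)" using sub by (simp add: subspace_def)
    then show "P (j - 1) \<noteq> {}" by blast
  qed
qed

lemma bad_region_small_span:
  assumes fin: "finite (carrier R)" and \<omega>: "\<omega> \<in> draws t k P"
    and idx: "1 \<le> j" "j \<le> t" "i < k x j"
    and sub: "\<forall>j<t. subspace R n (P j) \<and> dim R n (P j) = d j"
    and chain: "\<forall>j. Suc j < t \<longrightarrow> P j \<subset> P (Suc j)"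
    and k1: "\<forall>x. k x 1 < d 0"
    and kj: "\<forall>x j. 2 \<le> j \<and> j \<le> t \<longrightarrow> k x j \<le> d (j - 1) - d (j - 2)"
  shows "\<exists>B. finite B \<and> B \<subseteq> P (j - 1) \<and> card B < dim R n (P (j - 1))
             \<and> bad_region R n k P \<omega> x j i = span R n B"
proof (cases "j = 1")
  case True
  have "dim R n (P 0) = d 0" using sub idx True by simp
  then have "card (block k \<omega> (\<not> x) 1) < dim R n (P 0)"
    using card_block[of k \<omega> "\<not> x" 1] k1 by (metis order.strict_trans1)
  moreover have "block k \<omega> (\<not> x) 1 \<subseteq> P 0" using block_draws[OF \<omega>, of 1 "\<not> x"] idx True by simp
  moreover have "bad_region R n k P \<omega> x j i = span R n (block k \<omega> (\<not> x) 1)"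
    using True by (simp add: bad_region_def)
  ultimately show ?thesis using True finite_block by (intro exI[of _ "block k \<omega> (\<not> x) 1"]) simp
next
  case False
  then have j2: "2 \<le> j" using idx by simp
  define W where "W = {\<omega> x j i' | i'. i' < i}"
  have Y: "subspace R n (P (j - 1))" "dim R n (P (j - 1)) = d (j - 1)" using sub idx by auto
  have Q: "subspace R n (P (j - 2))" "dim R n (P (j - 2)) = d (j - 2)" using sub idx j2 by auto
  obtain B where B: "finite B" "card B = d (j - 2)" "B \<subseteq> P (j - 2)" "span R n B = P (j - 2)"
    using dim_basis[OF fin Q(1)] Q(2) by auto
  have QY: "P (j - 2) \<subseteq> P (j - 1)" using chain_mono[OF chain, of "j - 2" "j - 1"] idx by simp
  have WY: "W \<subseteq> P (j - 1)" unfolding W_def using draws_inside[OF \<omega>] idx by auto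
  have Yv: "P (j - 1) \<subseteq> vecs R n" using Y by (simp add: subspace_def)
  have finW: "finite W" and cardW: "card W \<le> i"
  proof -
    have eq: "W = (\<lambda>i'. \<omega> x j i') ` {..<i}" unfolding W_def by auto
    show "finite W" unfolding eq by simp
    show "card W \<le> i" unfolding eq using card_image_le[of "{..<i}"] by simp
  qed
  have "card (B \<union> W) \<le> d (j - 2) + i" using card_Un_le[of B W] B(2) cardW by simp
  also have "\<dots> < d (j - 1)"
    using kj[rule_format, of j x] idx j2 by linarith
  finally have "card (B \<union> W) < dim R n (P (j - 1))" using Y(2) by simp
  moreover have "bad_region R n k P \<omega> x j i = span R n (B \<union> W)"
    using False span_Un_span[of B n W] B(3,4) QY WY Yv
    unfolding bad_region_def W_def by (metis (no_types, lifting) dual_order.trans)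
  ultimately show ?thesis using B(1,3) finW QY WY by blast
qed

lemma prob_bad_draw:
  assumes fin: "finite (carrier R)"
    and idx: "1 \<le> j" "j \<le> t" "i < k x j"
    and sub: "\<forall>j<t. subspace R n (P j) \<and> dim R n (P j) = d j"
    and chain: "\<forall>j. Suc j < t \<longrightarrow> P j \<subset> P (Suc j)"
    and k1: "\<forall>x. k x 1 < d 0"
    and kj: "\<forall>x j. 2 \<le> j \<and> j \<le> t \<longrightarrow> k x j \<le> d (j - 1) - d (j - 2)"
  shows "measure_pmf.prob (pmf_of_set (draws t k P)) {\<omega>. bad_draw R n k P \<omega> x j i}
           \<le> 1 / card (carrier R)"
proof (rule prob_single_draw_bound[where jr = j and ir = i and xr = x])
  have subs: "\<forall>j<t. subspace R n (P j)" using sub by simp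
  show "finite (P (j - 1))" if "1 \<le> j" "j \<le> t" for j
    using finite_level[OF fin subs that] .
  show "draws t k P \<noteq> {}" using draws_finite_nonempty[OF fin subs] by simp
  show "card (carrier R) > 0" using fin carrier_not_empty by (simp add: card_gt_0_iff)
  fix \<omega> assume \<omega>: "\<omega> \<in> draws t k P"
  obtain B where B: "finite B" "B \<subseteq> P (j - 1)" "card B < dim R n (P (j - 1))"
    and region: "bad_region R n k P \<omega> x j i = span R n B"
    using bad_region_small_span[OF fin \<omega> idx sub chain k1 kj] by blast
  have "{y \<in> P (j - 1). redraw \<omega> x j i y \<in> {\<omega>. bad_draw R n k P \<omega> x j i}} = P (j - 1) \<inter> span R n B"
    using region bad_region_redraw[of R n k P \<omega> x j i] by (auto simp: bad_draw_def redraw_def)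
  then show "card {y \<in> P (j - 1). redraw \<omega> x j i y \<in> {\<omega>. bad_draw R n k P \<omega> x j i}}
               * card (carrier R) \<le> card (P (j - 1))"
    using card_inter_small_span[OF fin _ B] sub idx by simp
qed (use idx in simp_all)

end

subsection \<open>Good draws\<close>

context field
begin

lemma PIv_eq_span_blocks:
  assumes \<omega>: "\<omega> \<in> draws t k P" and sub: "\<forall>j<t. subspace R n (P j)" and m: "m \<le> t"
  shows "PIv R n k \<omega> x m = span R n (\<Union>j\<in>{1..m}. block k \<omega> x j)"
proof -
  define F where "F = block k \<omega> x ` {1..m}"
  have "\<Union>F \<subseteq> vecs R n"
  proof
    fix v assume "v \<in> \<Union>F"
    then obtain j where j: "1 \<le> j" "j \<le> m" and v: "v \<in> block k \<omega> x j" unfolding F_def by auto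
    then have "v \<in> P (j - 1)" using block_draws[OF \<omega>] m by fastforce
    moreover have "subspace R n (P (j - 1))" using sub j m by simp
    ultimately show "v \<in> vecs R n" by (auto simp: subspace_def)
  qed
  moreover have "{piv R n k \<omega> x j | j. j \<in> {1..m}} = span R n ` F"
    unfolding F_def piv_def block_def by auto
  ultimately have "PIv R n k \<omega> x m = span R n (\<Union>F)"
    unfolding PIv_def subspace_sum_def using span_Union_spans by simp
  then show ?thesis unfolding F_def by simp
qed

lemma span_blocks_inter_bottom:
  assumes \<omega>: "\<omega> \<in> draws t k P" and sub: "\<forall>j<t. subspace R n (P j)"
    and chain: "\<forall>j. Suc j < t \<longrightarrow> P j \<subset> P (Suc j)"
    and good: "\<forall>j i. 2 \<le> j \<and> j \<le> t \<and> i < k x j \<longrightarrow> \<not> bad_draw R n k P \<omega> x j i"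
  shows "1 \<le> m \<Longrightarrow> m \<le> t \<Longrightarrow>
     span R n (\<Union>j\<in>{1..m}. block k \<omega> x j) \<inter> P 0 \<subseteq> span R n (block k \<omega> x 1)"
proof (induction m)
  case 0
  then show ?case by simp
next
  case (Suc m)
  show ?case
  proof (cases "m = 0")
    case True
    then show ?thesis by simp
  next
    case False
    define Q where "Q = P (m - 1)"
    define A where "A = (\<Union>j\<in>{1..m}. block k \<omega> x j)"
    have Q: "subspace R n Q" unfolding Q_def using sub Suc.prems by simp
    have AQ: "A \<subseteq> Q"
    proof
      fix v assume "v \<in> A"
      then obtain j where j: "1 \<le> j" "j \<le> m" and v: "v \<in> block k \<omega> x j" unfolding A_def by auto
      have "v \<in> P (j - 1)" using block_draws[OF \<omega> j(1)] j Suc.prems v by auto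
      moreover have "P (j - 1) \<subseteq> P (m - 1)" using chain_mono[OF chain] j Suc.prems by simp
      ultimately show "v \<in> Q" unfolding Q_def by blast
    qed
    have Pm: "P m \<subseteq> vecs R n" using sub Suc.prems by (simp add: subspace_def)
    have ws: "\<omega> x (Suc m) i \<in> vecs R n" if "i < k x (Suc m)" for i
      using draws_inside[OF \<omega> _ Suc.prems(2) that] Pm by auto
    have indep: "\<omega> x (Suc m) i \<notin> span R n (Q \<union> {\<omega> x (Suc m) i' | i'. i' < i})"
      if "i < k x (Suc m)" for i
    proof -
      have "\<not> bad_draw R n k P \<omega> x (Suc m) i" using good Suc.prems that False by simp
      then show ?thesis using False unfolding bad_draw_def bad_region_def Q_def
        by (simp add: numeral_2_eq_2)
    qed
    have extension: "span R n (A \<union> block k \<omega> x (Suc m)) \<inter> Q \<subseteq> span R n A"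
      unfolding block_def by (rule span_independent_extension_inter[OF Q AQ ws indep])
    have blocks: "(\<Union>j\<in>{1..Suc m}. block k \<omega> x j) = A \<union> block k \<omega> x (Suc m)"
    proof -
      have "{1..Suc m} = insert (Suc m) {1..m}" by auto
      then show ?thesis unfolding A_def by auto
    qed
    have "P 0 \<subseteq> Q" unfolding Q_def using chain_mono[OF chain] Suc.prems by simp
    then have "span R n (\<Union>j\<in>{1..Suc m}. block k \<omega> x j) \<inter> P 0 \<subseteq> span R n A \<inter> P 0"
      unfolding blocks using extension by blast
    also have "\<dots> \<subseteq> span R n (block k \<omega> x 1)"
      using Suc.IH False Suc.prems unfolding A_def by simp
    finally show ?thesis .
  qed
qed

text \<open>For a draw without bad events, the first vector of pi_x(1) lies in every Pi_x(i) but
  in no Pi_y(j) of the other player y, so Pi_x(i) is never contained in Pi_y(j).\<close>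
lemma PIv_not_subset_other:
  assumes \<omega>: "\<omega> \<in> draws t k P" and sub: "\<forall>j<t. subspace R n (P j)"
    and chain: "\<forall>j. Suc j < t \<longrightarrow> P j \<subset> P (Suc j)"
    and k1: "\<forall>x. 1 \<le> k x 1"
    and good: "\<forall>x j i. 1 \<le> j \<and> j \<le> t \<and> i < k x j \<longrightarrow> \<not> bad_draw R n k P \<omega> x j i"
    and i: "i \<in> {1..t}" and j: "j \<in> {1..t}"
  shows "\<not> PIv R n k \<omega> x i \<subseteq> PIv R n k \<omega> (\<not> x) j"
proof
  assume subset: "PIv R n k \<omega> x i \<subseteq> PIv R n k \<omega> (\<not> x) j"
  define v where "v = \<omega> x 1 0"
  have "0 < k x 1" using k1 by (simp add: Suc_le_eq)
  then have v_block: "v \<in> block k \<omega> x 1" unfolding v_def block_def by blast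
  then have "v \<in> span R n (\<Union>j\<in>{1..i}. block k \<omega> x j)"
    using i span_superset by fastforce
  then have "v \<in> PIv R n k \<omega> (\<not> x) j"
    using subset PIv_eq_span_blocks[OF \<omega> sub, of i x] i by auto
  moreover have "v \<in> P 0" using block_draws[OF \<omega>, of 1 x] v_block i by auto
  ultimately have "v \<in> span R n (block k \<omega> (\<not> x) 1)"
    using span_blocks_inter_bottom[OF \<omega> sub chain, of "\<not> x" j] good j
      PIv_eq_span_blocks[OF \<omega> sub, of j "\<not> x"] by auto
  then have "bad_draw R n k P \<omega> x 1 0" unfolding bad_draw_def bad_region_def v_def by simp
  moreover have "1 \<le> t" using i by simp
  ultimately show False using good \<open>0 < k x 1\<close> by blast
qed

lemma prob_some_bad_draw:
  assumes fin: "finite (carrier R)"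
    and sub: "\<forall>j<t. subspace R n (P j) \<and> dim R n (P j) = d j"
    and chain: "\<forall>j. Suc j < t \<longrightarrow> P j \<subset> P (Suc j)"
    and k1: "\<forall>x. k x 1 < d 0"
    and kj: "\<forall>x j. 2 \<le> j \<and> j \<le> t \<longrightarrow> k x j \<le> d (j - 1) - d (j - 2)"
  shows "measure_pmf.prob (pmf_of_set (draws t k P)) (some_bad_draw R n k P t)
           \<le> card (draw_indices t k) / card (carrier R)"
proof -
  let ?prob = "measure_pmf.prob (pmf_of_set (draws t k P))"
  have "?prob (some_bad_draw R n k P t)
          \<le> (\<Sum>(x, j, i)\<in>draw_indices t k. ?prob {\<omega>. bad_draw R n k P \<omega> x j i})"
    unfolding some_bad_draw_def
    by (simp add: measure_pmf.finite_measure_subadditive_finite split_def finite_draw_indices)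
  also have "\<dots> \<le> (\<Sum>(x, j, i)\<in>draw_indices t k. 1 / card (carrier R))"
    using prob_bad_draw[OF fin _ _ _ sub chain k1 kj] by (intro sum_mono) auto
  finally show ?thesis by simp
qed

lemma incomparable_if_no_bad_draw:
  assumes \<omega>: "\<omega> \<in> draws t k P" "\<omega> \<notin> some_bad_draw R n k P t"
    and sub: "\<forall>j<t. subspace R n (P j)"
    and chain: "\<forall>j. Suc j < t \<longrightarrow> P j \<subset> P (Suc j)"
    and k1: "\<forall>x. 1 \<le> k x 1"
  shows "\<forall>i\<in>{1..t}. \<forall>j\<in>{1..t}.
           \<not> PIv R n k \<omega> True i \<subseteq> PIv R n k \<omega> False j \<and>
           \<not> PIv R n k \<omega> False j \<subseteq> PIv R n k \<omega> True i"
proof -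
  have "\<forall>x j i. 1 \<le> j \<and> j \<le> t \<and> i < k x j \<longrightarrow> \<not> bad_draw R n k P \<omega> x j i"
    using \<omega>(2) unfolding some_bad_draw_def by fastforce
  note incomparable = PIv_not_subset_other[OF \<omega>(1) sub chain k1 this]
  show ?thesis using incomparable[where x = True] incomparable[where x = False] by simp
qed

end

lemma prob_pmf_of_set_ge_compl:
  assumes "finite D" "D \<noteq> {}" and "D - B \<subseteq> G"
  shows "measure_pmf.prob (pmf_of_set D) G \<ge> 1 - measure_pmf.prob (pmf_of_set D) B"
proof -
  let ?prob = "measure_pmf.prob (pmf_of_set D)"
  have "1 - ?prob B = ?prob (UNIV - B)" using measure_pmf.prob_compl[of B] by simp
  also have "\<dots> = ?prob ((UNIV - B) \<inter> D)"
    using measure_Int_set_pmf[of "pmf_of_set D" "UNIV - B"] assms(1,2) by simp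
  also have "\<dots> \<le> ?prob G"
    using assms(3) by (intro measure_pmf.finite_measure_mono) auto
  finally show ?thesis .
qed

theorem lemma4:
  fixes n t :: nat and d :: "nat \<Rightarrow> nat" and k :: "bool \<Rightarrow> nat \<Rightarrow> nat"
  assumes k1: "\<forall>x. 1 \<le> k x 1 \<and> k x 1 < d 0"
      and kj: "\<forall>x j. 2 \<le> j \<and> j \<le> t \<longrightarrow> k x j \<le> d (j - 1) - d (j - 2)"
  shows "\<exists>C::real. \<forall>(R :: nat ring) (P :: nat \<Rightarrow> nat list set).
           field R \<longrightarrow> finite (carrier R) \<longrightarrow>
           (\<forall>j<t. subspace R n (P j) \<and> dim R n (P j) = d j) \<longrightarrow>
           (\<forall>j. Suc j < t \<longrightarrow> P j \<subset> P (Suc j)) \<longrightarrow>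
           measure_pmf.prob (pmf_of_set (draws t k P))
             {\<omega>. \<forall>i\<in>{1..t}. \<forall>j\<in>{1..t}.
                  \<not> PIv R n k \<omega> True i \<subseteq> PIv R n k \<omega> False j \<and>
                  \<not> PIv R n k \<omega> False j \<subseteq> PIv R n k \<omega> True i}
           \<ge> 1 - C / real (card (carrier R))"
proof (intro exI[of _ "real (card (draw_indices t k))"] allI impI)
  fix R :: "nat ring" and P :: "nat \<Rightarrow> nat list set"
  assume "field R" and fin: "finite (carrier R)"
    and sub: "\<forall>j<t. subspace R n (P j) \<and> dim R n (P j) = d j"
    and chain: "\<forall>j. Suc j < t \<longrightarrow> P j \<subset> P (Suc j)"
  interpret field R by fact
  have subs: "\<forall>j<t. subspace R n (P j)" using sub by simp
  let ?prob = "measure_pmf.prob (pmf_of_set (draws t k P))"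
  let ?Bad = "some_bad_draw R n k P t"
  let ?Good = "{\<omega>. \<forall>i\<in>{1..t}. \<forall>j\<in>{1..t}.
                  \<not> PIv R n k \<omega> True i \<subseteq> PIv R n k \<omega> False j \<and>
                  \<not> PIv R n k \<omega> False j \<subseteq> PIv R n k \<omega> True i}"
  have "draws t k P - ?Bad \<subseteq> ?Good"
    using incomparable_if_no_bad_draw[OF _ _ subs chain] k1 by blast
  then have "?prob ?Good \<ge> 1 - ?prob ?Bad"
    using draws_finite_nonempty[OF fin subs] by (intro prob_pmf_of_set_ge_compl)
  moreover have "?prob ?Bad \<le> card (draw_indices t k) / card (carrier R)"
    using prob_some_bad_draw[OF fin sub chain] k1 kj by blast
  ultimately show "?prob ?Good \<ge> 1 - real (card (draw_indices t k)) / card (carrier R)"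
    by linarith
qed

end
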